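(* Let $\mathcal P$ be a pre-Hahn-localizable family of probability measures on $(\Omega,\mathcal F)$ with localization $\mathcal Q$ whose supports $\{S_Q\}$ are pairwise disjoint, and let $\mathcal H=\mathcal H_{\mathcal F}^{\mathcal Q}$ be its Hahn-extension. Then for every $\mu\in\mathrm{ca}(\mathcal P)$ the set $\mathcal Q(\mu)$ is at most countable, the formula $\mu^{\mathcal Q}(A)=\sum_{Q\in\mathcal Q(\mu)}\mu(A\cap S_Q)$, $A\in\mathcal H$, defines a finite signed measure on $\mathcal H$ extending $\mu$, and $|\mu^{\mathcal Q}|=|\mu|^{\mathcal Q}$.
   Context: $\mathrm{ca}(\mathcal P)$ is the set of finite signed measures $\mu$ on $\mathcal F$ with $|\mu|\ll P$ for some $P\in\mathcal P$; $|\mu|$ is the total variation measure. $\mathcal P\lll\mathcal Q$ means each $P\in\mathcal P$ is absolutely continuous w.r.t. some $Q\in\mathcal Q$; $\mathrm{sconv}(\mathcal Q)$ denotes countable convex combinations. $\mathcal P$ is pre-Hahn-localizable with localization $\mathcal Q$ and supports $S_Q\in\mathcal F$ if $Q(S_R)=\delta_{QR}$ for $Q,R\in\mathcal Q$ and $\mathcal Q\lll\mathcal P\lll\mathrm{sconv}(\mathcal Q)$. Hahn-extension: $\mathcal H_{\mathcal F}^{\mathcal Q}=\sigma\big(\mathcal F\cup\{\bigcup_{Q\in\mathcal Q}E_Q:E_Q\in\mathcal F,E_Q\subseteq S_Q\}\big)$. $\mathcal Q(\mu)=\{Q\in\mathcal Q:|\mu|(S_Q)>0\}$; since $\mathcal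 Q(|\mu|)=\mathcal Q(\mu)$, $|\mu|^{\mathcal Q}(A)=\sum_{Q\in\mathcal Q(\mu)}|\mu|(A\cap S_Q)$. *)

theory Defs
  imports "HOL-Probability.Probability"
begin

text \<open>Finite signed measures on a sigma-algebra F over Omega, represented as real-valued
  set functions that are countably additive on F (values outside F are irrelevant).\<close>
definition fin_signed_measure :: "'a set \<Rightarrow> 'a set set \<Rightarrow> ('a set \<Rightarrow> real) \<Rightarrow> bool" where
  "fin_signed_measure \<Omega> F \<mu> \<longleftrightarrow> sigma_algebra \<Omega> F \<and>
     (\<forall>A. range A \<subseteq> F \<longrightarrow> disjoint_family A \<longrightarrow> (\<lambda>n. \<mu> (A n)) sums \<mu> (\<Union>n. A n))"

definition tot_var :: "'a set set \<Rightarrow> ('a set \<Rightarrow> real) \<Rightarrow> 'a set \<Rightarrow> real" where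
  "tot_var F \<mu> A = Sup {(\<Sum>B\<in>\<D>. \<bar>\<mu> B\<bar>) | \<D>. finite \<D> \<and> \<D> \<subseteq> F \<and> disjoint \<D> \<and> \<Union>\<D> = A}"

definition ca :: "'a set \<Rightarrow> 'a set set \<Rightarrow> 'a measure set \<Rightarrow> ('a set \<Rightarrow> real) set" where
  "ca \<Omega> F PP = {\<mu>. fin_signed_measure \<Omega> F \<mu> \<and>
      (\<exists>P\<in>PP. \<forall>A\<in>null_sets P. tot_var F \<mu> A = 0)}"

definition dominated_by :: "'a measure set \<Rightarrow> 'a measure set \<Rightarrow> bool" where
  "dominated_by PP QQ \<longleftrightarrow> (\<forall>P\<in>PP. \<exists>Q\<in>QQ. absolutely_continuous Q P)"

definition sconv :: "'a set \<Rightarrow> 'a set set \<Rightarrow> 'a measure set \<Rightarrow> 'a measure set" where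
  "sconv \<Omega> F QQ = {R. space R = \<Omega> \<and> sets R = F \<and>
     (\<exists>c q. (\<forall>n. 0 \<le> c n) \<and> c sums 1 \<and> (\<forall>n. q n \<in> QQ) \<and>
        (\<forall>A\<in>F. emeasure R A = (\<Sum>n. ennreal (c n) * emeasure (q n) A)))}"

definition pre_hahn_localizable ::
    "'a set \<Rightarrow> 'a set set \<Rightarrow> 'a measure set \<Rightarrow> 'a measure set \<Rightarrow> ('a measure \<Rightarrow> 'a set) \<Rightarrow> bool" where
  "pre_hahn_localizable \<Omega> F PP QQ S \<longleftrightarrow>
     (\<forall>Q\<in>QQ. prob_space Q \<and> space Q = \<Omega> \<and> sets Q = F \<and> S Q \<in> F) \<and>
     (\<forall>Q\<in>QQ. \<forall>R\<in>QQ. measure Q (S R) = (if Q = R then 1 else 0)) \<and>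
     dominated_by QQ PP \<and> dominated_by PP (sconv \<Omega> F QQ)"

definition hahn_ext :: "'a set \<Rightarrow> 'a set set \<Rightarrow> 'a measure set \<Rightarrow> ('a measure \<Rightarrow> 'a set) \<Rightarrow> 'a set set" where
  "hahn_ext \<Omega> F QQ S = sigma_sets \<Omega>
     (F \<union> {(\<Union>Q\<in>QQ. E Q) | E. \<forall>Q\<in>QQ. E Q \<in> F \<and> E Q \<subseteq> S Q})"

definition supp_fam :: "'a set set \<Rightarrow> 'a measure set \<Rightarrow> ('a measure \<Rightarrow> 'a set) \<Rightarrow> ('a set \<Rightarrow> real) \<Rightarrow> 'a measure set" where
  "supp_fam F QQ S \<mu> = {Q\<in>QQ. tot_var F \<mu> (S Q) > 0}"

end

theory Submission
  imports Defs
begin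

text \<open>Since \<open>\<mu>\<close> is absolutely continuous with respect to a countable convex combination
  \<open>R = (\<Sum>n. c\<^sub>n q\<^sub>n)\<close> of members of the localization, \<open>|\<mu>|\<close> is carried by the union \<open>T\<close> of the
  countably many supports \<open>S (q\<^sub>n)\<close> with \<open>c\<^sub>n > 0\<close>: both \<open>\<Omega> - T\<close> and every other support are
  \<open>R\<close>-null. Hence \<open>\<Q>(\<mu>)\<close> is countable and \<open>\<mu> A = (\<Sum>Q\<in>\<Q>(\<mu>). \<mu> (A \<inter> S Q))\<close> on \<open>F\<close>.
  Every set of the Hahn extension meets each support in an \<open>F\<close>-set, so the same series defines
  \<open>\<mu>\<^sup>\<Q>\<close> on it; countable additivity comes from summing the absolutely summable double family
  \<open>\<mu> (A\<^sub>n \<inter> S Q)\<close> in both orders. The total variation of \<open>\<mu>\<^sup>\<Q>\<close> splits over the disjoint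
  supports, and inside a single support \<open>\<mu>\<^sup>\<Q>\<close> and \<open>\<mu>\<close> have the same measurable partitions.\<close>

section \<open>Finite signed measures\<close>

locale fin_signed_measure_space =
  fixes \<Omega> :: "'a set" and M :: "'a set set" and m :: "'a set \<Rightarrow> real"
  assumes fin_signed_measure: "fin_signed_measure \<Omega> M m"

sublocale fin_signed_measure_space \<subseteq> sigma_algebra \<Omega> M
  using fin_signed_measure by (simp add: fin_signed_measure_def)

context fin_signed_measure_space
begin

lemma sums_Union: "range A \<subseteq> M \<Longrightarrow> disjoint_family A \<Longrightarrow> (\<lambda>n. m (A n)) sums m (\<Union>n. A n)"
  using fin_signed_measure by (simp add: fin_signed_measure_def)

lemma empty [simp]: "m {} = 0"
proof -
  have "(\<lambda>n. m {}) sums m (\<Union>n::nat. {})"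
    by (rule sums_Union) (auto simp: disjoint_family_on_def)
  then have "(\<lambda>n. m {}) \<longlonglongrightarrow> 0"
    using summable_LIMSEQ_zero sums_summable by blast
  then show ?thesis by (simp add: LIMSEQ_const_iff)
qed

lemma additive:
  assumes "A \<in> M" "B \<in> M" "A \<inter> B = {}"
  shows "m (A \<union> B) = m A + m B"
proof -
  have "range (binaryset A B) \<subseteq> M" "disjoint_family (binaryset A B)"
    using assms by (auto simp: range_binaryset_eq disjoint_family_on_def binaryset_def)
  from sums_Union[OF this] have "(\<lambda>n. m (binaryset A B n)) sums m (A \<union> B)"
    by (simp add: UN_binaryset_eq)
  then show ?thesis
    using binaryset_sums[of m A B] by (simp add: sums_unique2)
qed

lemma finite_additive: "finite D \<Longrightarrow> D \<subseteq> M \<Longrightarrow> disjoint D \<Longrightarrow> m (\<Union>D) = sum m D"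
proof (induction D rule: finite_induct)
  case (insert B D)
  then have "m (B \<union> \<Union>D) = m B + m (\<Union>D)"
    by (intro additive) (auto simp: pairwise_insert disjnt_def)
  with insert show ?case by (simp add: pairwise_insert)
qed simp

lemma summable_abs:
  assumes "range A \<subseteq> M" "disjoint_family A"
  shows "summable (\<lambda>n. \<bar>m (A n)\<bar>)"
proof -
  define P where "P n = (if 0 \<le> m (A n) then A n else {})" for n
  define N where "N n = (if 0 \<le> m (A n) then {} else A n)" for n
  have "summable (\<lambda>n. m (P n))" "summable (\<lambda>n. m (N n))"
    using assms by (auto intro!: sums_summable[OF sums_Union]
        simp: P_def N_def disjoint_family_on_def)
  then have "summable (\<lambda>n. m (P n) - m (N n))" by (rule summable_diff)
  moreover have "m (P n) - m (N n) = \<bar>m (A n)\<bar>" for n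
    by (simp add: P_def N_def)
  ultimately show ?thesis by simp
qed

lemma has_sum_countable_Union:
  assumes "countable I" "\<And>i. i \<in> I \<Longrightarrow> B i \<in> M" "disjoint_family_on B I"
  shows "((\<lambda>i. m (B i)) has_sum m (\<Union>i\<in>I. B i)) I"
proof -
  define f where "f = to_nat_on I"
  have inj: "inj_on f I" unfolding f_def using assms(1) by (rule inj_on_to_nat_on)
  define C where "C n = (if n \<in> f ` I then B (the_inv_into I f n) else {})" for n
  have C_f: "C (f i) = B i" if "i \<in> I" for i
    using that inj by (auto simp: C_def the_inv_into_f_f)
  have C: "range C \<subseteq> M" "disjoint_family C"
    using assms(2,3) inj by (fastforce simp: disjoint_family_on_def C_def the_inv_into_f_f)+
  then have "((\<lambda>n. m (C n)) has_sum m (\<Union>n. C n)) UNIV"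
    using norm_summable_imp_has_sum[OF _ sums_Union] summable_abs by simp
  moreover have "(\<Union>n. C n) = (\<Union>i\<in>I. B i)"
    using inj by (auto simp: C_def the_inv_into_f_f)
  ultimately have "((\<lambda>n. m (C n)) has_sum m (\<Union>i\<in>I. B i)) (f ` I)"
    by (subst has_sum_cong_neutral[where T=UNIV]) (auto simp: C_def)
  then have "(((\<lambda>n. m (C n)) \<circ> f) has_sum m (\<Union>i\<in>I. B i)) I"
    using has_sum_reindex[OF inj] by blast
  then show ?thesis
    by (rule has_sum_cong[THEN iffD1, rotated]) (simp add: C_f)
qed

lemma unbounded_split:
  assumes "E \<in> M" and unbounded: "\<forall>K. \<exists>B\<in>M. B \<subseteq> E \<and> K < \<bar>m B\<bar>"
  obtains E' where "E' \<in> M" "\<forall>K. \<exists>B\<in>M. B \<subseteq> E' \<and> K < \<bar>m B\<bar>" "E' \<subseteq> E" "1 \<le> \<bar>m (E - E')\<bar>"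
proof -
  obtain B where B: "B \<in> M" "B \<subseteq> E" "\<bar>m E\<bar> + 1 < \<bar>m B\<bar>"
    using unbounded by blast
  have "m E = m B + m (E - B)"
    using additive[of B "E - B"] B assms(1) Diff by (simp add: Un_absorb1)
  then have large: "1 \<le> \<bar>m B\<bar>" "1 \<le> \<bar>m (E - B)\<bar>" using B(3) by auto
  have "(\<forall>K. \<exists>C\<in>M. C \<subseteq> B \<and> K < \<bar>m C\<bar>) \<or> (\<forall>K. \<exists>C\<in>M. C \<subseteq> E - B \<and> K < \<bar>m C\<bar>)"
  proof (rule ccontr)
    assume "\<not> ?thesis"
    then obtain K1 K2 where K1: "\<forall>C\<in>M. C \<subseteq> B \<longrightarrow> \<bar>m C\<bar> \<le> K1"
      and K2: "\<forall>C\<in>M. C \<subseteq> E - B \<longrightarrow> \<bar>m C\<bar> \<le> K2"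
      by (meson not_le)
    obtain C where C: "C \<in> M" "C \<subseteq> E" "K1 + K2 < \<bar>m C\<bar>"
      using unbounded by blast
    have "m C = m (C \<inter> B) + m (C - B)"
      using additive[OF Int[OF C(1) B(1)] Diff[OF C(1) B(1)]] by (simp add: Int_Diff_Un Int_Diff_disjoint)
    moreover have "\<bar>m (C \<inter> B)\<bar> \<le> K1"
      by (rule K1[rule_format, OF Int[OF C(1) B(1)]]) blast
    moreover have "\<bar>m (C - B)\<bar> \<le> K2"
      by (rule K2[rule_format, OF Diff[OF C(1) B(1)]]) (use C(2) in blast)
    ultimately show False using C(3) by linarith
  qed
  then show ?thesis
  proof
    assume "\<forall>K. \<exists>C\<in>M. C \<subseteq> B \<and> K < \<bar>m C\<bar>"
    then show ?thesis using that B(1,2) large(2) by blast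
  next
    assume "\<forall>K. \<exists>C\<in>M. C \<subseteq> E - B \<and> K < \<bar>m C\<bar>"
    moreover have "E - (E - B) = B" using B(2) by blast
    ultimately show ?thesis using that[of "E - B"] Diff[OF assms(1) B(1)] large(1) by simp
  qed
qed

text \<open>If \<open>m\<close> were unbounded, \<open>unbounded_split\<close> would peel off infinitely many disjoint sets
  of measure at least \<open>1\<close>, contradicting countable additivity.\<close>

lemma bounded: "\<exists>K. \<forall>A\<in>M. \<bar>m A\<bar> \<le> K"
proof (rule ccontr)
  define unbounded where "unbounded E \<longleftrightarrow> (\<forall>K. \<exists>B\<in>M. B \<subseteq> E \<and> K < \<bar>m B\<bar>)" for E
  assume "\<not> ?thesis"
  then have "unbounded \<Omega>"
    using sets_into_space by (fastforce simp: unbounded_def not_le)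
  obtain U where U: "\<And>n. U n \<in> M \<and> unbounded (U n)"
    "\<And>n. U (Suc n) \<subseteq> U n \<and> 1 \<le> \<bar>m (U n - U (Suc n))\<bar>"
  proof -
    have "\<exists>E. E \<in> M \<and> unbounded E" using top \<open>unbounded \<Omega>\<close> by blast
    moreover have "\<exists>E'. (E' \<in> M \<and> unbounded E') \<and> E' \<subseteq> E \<and> 1 \<le> \<bar>m (E - E')\<bar>"
      if "E \<in> M \<and> unbounded E" for E
      using that unbounded_split[of E] unfolding unbounded_def by metis
    ultimately show ?thesis
      using that dependent_nat_choice[of "\<lambda>_ E. E \<in> M \<and> unbounded E"
          "\<lambda>_ E E'. E' \<subseteq> E \<and> 1 \<le> \<bar>m (E - E')\<bar>"] by blast
  qed
  define D where "D n = U n - U (Suc n)" for n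
  have "D = (\<lambda>n. (\<Omega> - U (Suc n)) - (\<Omega> - U n))"
    using sets_into_space U(1) U(2) by (fastforce simp: D_def)
  then have "disjoint_family D"
    using disjoint_family_Suc[of "\<lambda>n. \<Omega> - U n"] U(2) by (simp add: Diff_mono)
  moreover have "range D \<subseteq> M" using U(1) by (auto simp: D_def)
  ultimately have "summable (\<lambda>n. m (D n))" by (intro sums_summable[OF sums_Union])
  then have "(\<lambda>n. m (D n)) \<longlonglongrightarrow> 0" by (rule summable_LIMSEQ_zero)
  then obtain n0 where "\<forall>n\<ge>n0. norm (m (D n) - 0) < 1"
    using LIMSEQ_D zero_less_one by blast
  then show False using U(2)[of n0] by (auto simp: D_def dest: spec[of _ n0])
qed

end

section \<open>Total variation\<close>

definition finite_partitions :: "'a set set \<Rightarrow> 'a set \<Rightarrow> 'a set set set" where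
  "finite_partitions M A = {D. finite D \<and> D \<subseteq> M \<and> disjoint D \<and> \<Union>D = A}"

lemma tot_var_eq_SUP: "tot_var M m A = (SUP D\<in>finite_partitions M A. \<Sum>B\<in>D. \<bar>m B\<bar>)"
  by (simp add: tot_var_def finite_partitions_def setcompr_eq_image)

lemma tot_var_le:
  assumes "A \<in> M" "\<And>D. D \<in> finite_partitions M A \<Longrightarrow> (\<Sum>B\<in>D. \<bar>m B\<bar>) \<le> c"
  shows "tot_var M m A \<le> c"
proof -
  have "{A} \<in> finite_partitions M A" using assms(1) by (simp add: finite_partitions_def)
  then show ?thesis unfolding tot_var_eq_SUP using assms(2) by (intro cSUP_least) auto
qed

lemma tot_var_cong:
  assumes "\<And>X. X \<subseteq> A \<Longrightarrow> X \<in> M \<longleftrightarrow> X \<in> N" and "\<And>X. X \<subseteq> A \<Longrightarrow> X \<in> M \<Longrightarrow> m X = n X"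
  shows "tot_var M m A = tot_var N n A"
proof -
  have "finite_partitions M A = finite_partitions N A"
    using assms(1) by (auto simp: finite_partitions_def)
  moreover have "(\<Sum>B\<in>D. \<bar>m B\<bar>) = (\<Sum>B\<in>D. \<bar>n B\<bar>)" if "D \<in> finite_partitions M A" for D
    using that assms(2) by (intro sum.cong refl arg_cong[where f=abs]) (auto simp: finite_partitions_def)
  ultimately show ?thesis
    unfolding tot_var_eq_SUP by (intro SUP_cong) auto
qed

context fin_signed_measure_space
begin

lemma bdd_above_partition_sums: "bdd_above ((\<lambda>D. \<Sum>B\<in>D. \<bar>m B\<bar>) ` finite_partitions M A)"
proof -
  obtain K where K: "\<forall>A\<in>M. \<bar>m A\<bar> \<le> K" using bounded by blast
  have "(\<Sum>B\<in>D. \<bar>m B\<bar>) \<le> 2 * K" if D: "finite D" "D \<subseteq> M" "disjoint D" for D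
  proof -
    define Dp where "Dp = {B\<in>D. 0 \<le> m B}"
    define Dn where "Dn = {B\<in>D. m B < 0}"
    have parts: "finite Dp" "finite Dn" "Dp \<subseteq> M" "Dn \<subseteq> M" "disjoint Dp" "disjoint Dn"
      using D by (auto simp: Dp_def Dn_def pairwise_def)
    have "D = Dp \<union> Dn" "Dp \<inter> Dn = {}" by (auto simp: Dp_def Dn_def)
    then have "(\<Sum>B\<in>D. \<bar>m B\<bar>) = (\<Sum>B\<in>Dp. \<bar>m B\<bar>) + (\<Sum>B\<in>Dn. \<bar>m B\<bar>)"
      using parts by (simp add: sum.union_disjoint)
    also have "\<dots> = m (\<Union>Dp) - m (\<Union>Dn)"
      using parts by (simp add: finite_additive Dp_def Dn_def sum_negf[symmetric])
    also have "\<dots> \<le> 2 * K"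
      using K finite_Union parts by (smt (verit))
    finally show ?thesis .
  qed
  then show ?thesis by (intro bdd_aboveI2[where M="2 * K"]) (simp add: finite_partitions_def)
qed

lemma sum_abs_le_tot_var:
  assumes "finite I" "\<And>i. i \<in> I \<Longrightarrow> B i \<in> M" "disjoint_family_on B I" "(\<Union>i\<in>I. B i) = A"
  shows "(\<Sum>i\<in>I. \<bar>m (B i)\<bar>) \<le> tot_var M m A"
proof -
  have "(\<Sum>i\<in>I. \<bar>m (B i)\<bar>) = (\<Sum>X\<in>B ` I. \<bar>m X\<bar>)"
  proof (subst sum.reindex_nontrivial[OF assms(1)])
    fix i j assume "i \<in> I" "j \<in> I" "i \<noteq> j" "B i = B j"
    then have "B i = {}" using assms(3) by (metis Int_absorb disjoint_family_onD)
    then show "\<bar>m (B i)\<bar> = 0" by simp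
  qed simp
  also have "\<dots> \<le> tot_var M m A"
    unfolding tot_var_eq_SUP using assms
    by (intro cSUP_upper bdd_above_partition_sums)
       (auto simp: finite_partitions_def disjoint_family_on_disjoint_image)
  finally show ?thesis .
qed

lemma abs_le_tot_var: "A \<in> M \<Longrightarrow> \<bar>m A\<bar> \<le> tot_var M m A"
  using sum_abs_le_tot_var[of "{A}" id A] by (simp add: disjoint_family_on_def)

lemma tot_var_nonneg: "A \<in> M \<Longrightarrow> 0 \<le> tot_var M m A"
  using abs_le_tot_var by (meson abs_ge_zero order_trans)

lemma tot_var_superadditive:
  assumes "A \<in> M" "B \<in> M" "A \<inter> B = {}"
  shows "tot_var M m A + tot_var M m B \<le> tot_var M m (A \<union> B)"
proof -
  have joint: "(\<Sum>X\<in>D1. \<bar>m X\<bar>) + (\<Sum>X\<in>D2. \<bar>m X\<bar>) \<le> tot_var M m (A \<union> B)"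
    if "D1 \<in> finite_partitions M A" "D2 \<in> finite_partitions M B" for D1 D2
  proof -
    have D1: "finite D1" "D1 \<subseteq> M" "disjoint D1" "\<Union>D1 = A"
      and D2: "finite D2" "D2 \<subseteq> M" "disjoint D2" "\<Union>D2 = B"
      using that by (simp_all add: finite_partitions_def)
    txt \<open>Indexing the joined partition by \<open>D1 <+> D2\<close> spares us from merging the two
      partitions as sets, which may share the empty set.\<close>
    have "(\<Sum>X\<in>D1 <+> D2. \<bar>m (case_sum id id X)\<bar>) \<le> tot_var M m (A \<union> B)"
    proof (rule sum_abs_le_tot_var)
      show "finite (D1 <+> D2)" using D1(1) D2(1) by simp
      show "case_sum id id X \<in> M" if "X \<in> D1 <+> D2" for X using that D1(2) D2(2) by auto
      show "disjoint_family_on (case_sum id id) (D1 <+> D2)"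
        unfolding disjoint_family_on_def
      proof (intro ballI impI)
        fix X Y assume "X \<in> D1 <+> D2" "Y \<in> D1 <+> D2" "X \<noteq> Y"
        then show "case_sum id id X \<inter> case_sum id id Y = {}"
          using D1(3,4) D2(3,4) assms(3)
          by (elim PlusE; simp; blast dest: disjointD)
      qed
      show "(\<Union>X\<in>D1 <+> D2. case_sum id id X) = A \<union> B" using D1(4) D2(4) by auto
    qed
    then show ?thesis using D1(1) D2(1) by (simp add: sum.Plus comp_def)
  qed
  have A_bound: "tot_var M m A \<le> tot_var M m (A \<union> B) - (\<Sum>X\<in>D2. \<bar>m X\<bar>)"
    if "D2 \<in> finite_partitions M B" for D2
    by (rule tot_var_le[OF assms(1)]) (use joint[OF _ that] in \<open>simp add: le_diff_eq\<close>)
  have "tot_var M m B \<le> tot_var M m (A \<union> B) - tot_var M m A"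
    by (rule tot_var_le[OF assms(2)]) (drule A_bound, linarith)
  then show ?thesis by simp
qed

lemma tot_var_mono:
  assumes "A \<in> M" "B \<in> M" "A \<subseteq> B"
  shows "tot_var M m A \<le> tot_var M m B"
  using tot_var_superadditive[of A "B - A"] tot_var_nonneg[of "B - A"] assms Diff[OF assms(2,1)]
  by (simp add: Un_absorb1 Diff_partition)

lemma sum_tot_var_le:
  assumes "finite G" "\<And>i. i \<in> G \<Longrightarrow> E i \<in> M" "disjoint_family_on E G"
  shows "(\<Sum>i\<in>G. tot_var M m (E i)) \<le> tot_var M m (\<Union>i\<in>G. E i)"
  using assms
proof (induction G rule: finite_induct)
  case (insert j G)
  have "E j \<inter> (\<Union>i\<in>G. E i) = {}"
    using insert.hyps(2) insert.prems(2) by (fastforce simp: disjoint_family_on_def)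
  then have "tot_var M m (E j) + tot_var M m (\<Union>i\<in>G. E i) \<le> tot_var M m (\<Union>i\<in>insert j G. E i)"
    using insert.prems(1) insert.hyps(1)
    by (simp add: tot_var_superadditive finite_UN)
  moreover have "(\<Sum>i\<in>G. tot_var M m (E i)) \<le> tot_var M m (\<Union>i\<in>G. E i)"
    using insert by (simp add: disjoint_family_on_def)
  ultimately show ?case using insert.hyps by simp
qed (simp add: tot_var_nonneg)

lemma tot_var_eq_0D:
  assumes "tot_var M m E = 0" "E \<in> M" "B \<in> M" "B \<subseteq> E"
  shows "m B = 0"
  using abs_le_tot_var[of B] tot_var_mono[of B E] assms by simp

lemma has_sum_Int_supports:
  assumes "countable I" "\<And>Q. Q \<in> I \<Longrightarrow> S Q \<in> M" "disjoint_family_on S I"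
    and null: "tot_var M m (\<Omega> - (\<Union>Q\<in>I. S Q)) = 0" and "A \<in> M"
  shows "((\<lambda>Q. m (A \<inter> S Q)) has_sum m A) {Q \<in> I. 0 < tot_var M m (S Q)}"
proof -
  define T where "T = (\<Union>Q\<in>I. S Q)"
  have T: "T \<in> M" unfolding T_def using assms(1,2) by (rule countable_UN'')
  have "m (A - T) = 0"
    using tot_var_eq_0D[OF null[folded T_def] Diff[OF top T] Diff[OF assms(5) T]]
      sets_into_space[OF assms(5)] by blast
  then have "m A = m (A \<inter> T)"
    using additive[OF Int[OF assms(5) T] Diff[OF assms(5) T]] by (simp add: Int_Diff_Un Int_Diff_disjoint)
  moreover have "((\<lambda>Q. m (A \<inter> S Q)) has_sum m (\<Union>Q\<in>I. A \<inter> S Q)) I"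
    using assms(1-3,5) by (intro has_sum_countable_Union) (auto simp: disjoint_family_on_def)
  moreover have "(\<Union>Q\<in>I. A \<inter> S Q) = A \<inter> T" by (auto simp: T_def)
  ultimately have "((\<lambda>Q. m (A \<inter> S Q)) has_sum m A) I" by simp
  moreover have "m (A \<inter> S Q) = 0" if "Q \<in> I" "\<not> 0 < tot_var M m (S Q)" for Q
  proof -
    have "tot_var M m (S Q) = 0" using that tot_var_nonneg[OF assms(2)] by force
    then show ?thesis
      using tot_var_eq_0D[OF _ assms(2)[OF that(1)] Int[OF assms(5) assms(2)[OF that(1)]]] by blast
  qed
  ultimately show ?thesis
    by (subst has_sum_cong_neutral[where T=I]) auto
qed

end

section \<open>The Hahn extension\<close>

lemma sigma_algebra_hahn_ext:
  assumes "sigma_algebra \<Omega> F"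
  shows "sigma_algebra \<Omega> (hahn_ext \<Omega> F QQ S)"
proof -
  interpret sigma_algebra \<Omega> F by fact
  have "(\<Union>Q\<in>QQ. E Q) \<subseteq> \<Omega>" if "\<forall>Q\<in>QQ. E Q \<in> F" for E
    using that sets_into_space by blast
  then show ?thesis
    unfolding hahn_ext_def using space_closed by (intro sigma_algebra_sigma_sets) auto
qed

lemma sets_subset_hahn_ext: "F \<subseteq> hahn_ext \<Omega> F QQ S"
  by (auto simp: hahn_ext_def)

lemma UN_Int_support:
  assumes "disjoint_family_on S I" "i \<in> I" "\<And>j. j \<in> I \<Longrightarrow> E j \<subseteq> S j"
  shows "(\<Union>j\<in>I. E j) \<inter> S i = E i"
proof
  show "E i \<subseteq> (\<Union>j\<in>I. E j) \<inter> S i" using assms(2,3) by blast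
  show "(\<Union>j\<in>I. E j) \<inter> S i \<subseteq> E i"
  proof
    fix x assume "x \<in> (\<Union>j\<in>I. E j) \<inter> S i"
    then obtain j where j: "j \<in> I" "x \<in> E j" "x \<in> S i" by blast
    then have "x \<in> S j" using assms(3) by blast
    with j assms(1,2) have "j = i" by (auto simp: disjoint_family_on_def)
    with j show "x \<in> E i" by simp
  qed
qed

lemma hahn_ext_Int_support:
  assumes "sigma_algebra \<Omega> F" "disjoint_family_on S QQ" "Q \<in> QQ" "S Q \<in> F"
    and "A \<in> hahn_ext \<Omega> F QQ S"
  shows "A \<inter> S Q \<in> F"
proof -
  interpret sigma_algebra \<Omega> F by fact
  from assms(5) show ?thesis
    unfolding hahn_ext_def
  proof induction
    case (Basic A)
    then show ?case
    proof
      assume "A \<in> F"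
      then show ?thesis using assms(4) by (rule Int)
    next
      assume "A \<in> {(\<Union>R\<in>QQ. E R) | E. \<forall>R\<in>QQ. E R \<in> F \<and> E R \<subseteq> S R}"
      then obtain E where A: "A = (\<Union>R\<in>QQ. E R)" and E: "\<forall>R\<in>QQ. E R \<in> F \<and> E R \<subseteq> S R"
        by blast
      have "E R \<subseteq> S R" if "R \<in> QQ" for R using E that by blast
      from UN_Int_support[OF assms(2,3) this] have "A \<inter> S Q = E Q" unfolding A .
      then show ?thesis using E assms(3) by simp
    qed
  next
    case (Compl A)
    have "(\<Omega> - A) \<inter> S Q = S Q - A \<inter> S Q" using sets_into_space[OF assms(4)] by blast
    with Diff[OF assms(4) Compl.IH] show ?case by (simp only:)
  next
    case (Union A)
    have "(\<Union>i. A i \<inter> S Q) \<in> F" using Union.IH by (intro countable_UN) auto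
    moreover have "(\<Union>i. A i) \<inter> S Q = (\<Union>i. A i \<inter> S Q)" by blast
    ultimately show ?case by (simp only:)
  qed simp
qed

section \<open>Localized measures\<close>

lemma has_sum_sum:
  fixes f :: "'i \<Rightarrow> 'a \<Rightarrow> 'b::topological_comm_monoid_add"
  assumes "finite I" "\<And>i. i \<in> I \<Longrightarrow> (f i has_sum s i) A"
  shows "((\<lambda>x. \<Sum>i\<in>I. f i x) has_sum (\<Sum>i\<in>I. s i)) A"
  using assms by (induction I rule: finite_induct) (simp_all add: has_sum_add)

lemma disjoint_family_on_Times:
  assumes "disjoint_family_on A J" "disjoint_family_on S I"
  shows "disjoint_family_on (\<lambda>p. A (fst p) \<inter> S (snd p)) (J \<times> I)"
  unfolding disjoint_family_on_def
proof (intro ballI impI)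
  fix p p' assume p: "p \<in> J \<times> I" "p' \<in> J \<times> I" "p \<noteq> p'"
  have mem: "fst p \<in> J" "fst p' \<in> J" "snd p \<in> I" "snd p' \<in> I" using p(1,2) by auto
  from p(3) have "fst p \<noteq> fst p' \<or> snd p \<noteq> snd p'" by (simp add: prod_eq_iff)
  then have "A (fst p) \<inter> A (fst p') = {} \<or> S (snd p) \<inter> S (snd p') = {}"
    using disjoint_family_onD[OF assms(1) mem(1,2)] disjoint_family_onD[OF assms(2) mem(3,4)] by blast
  then show "A (fst p) \<inter> S (snd p) \<inter> (A (fst p') \<inter> S (snd p')) = {}" by blast
qed

text \<open>For \<open>I = \<Q>(\<mu>)\<close> this is the measure \<open>\<mu>\<^sup>\<Q>\<close> of the paper.\<close>

definition localized_measure :: "('b \<Rightarrow> 'a set) \<Rightarrow> 'b set \<Rightarrow> ('a set \<Rightarrow> real) \<Rightarrow> 'a set \<Rightarrow> real" where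
  "localized_measure S I m A = (\<Sum>\<^sub>\<infinity>Q\<in>I. m (A \<inter> S Q))"

locale hahn_localization = fin_signed_measure_space +
  fixes H :: "'a set set" and I :: "'b set" and S :: "'b \<Rightarrow> 'a set"
  assumes sigma_algebra_H: "sigma_algebra \<Omega> H" and sets_subset_H: "M \<subseteq> H"
    and countable_I: "countable I" and disjoint_S: "disjoint_family_on S I"
    and Int_support: "\<And>A Q. A \<in> H \<Longrightarrow> Q \<in> I \<Longrightarrow> A \<inter> S Q \<in> M"
begin

lemma has_sum_localized: "A \<in> H \<Longrightarrow> ((\<lambda>Q. m (A \<inter> S Q)) has_sum m (\<Union>Q\<in>I. A \<inter> S Q)) I"
  using disjoint_S Int_support
  by (intro has_sum_countable_Union countable_I) (auto simp: disjoint_family_on_def)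

lemma summable_localized: "A \<in> H \<Longrightarrow> (\<lambda>Q. m (A \<inter> S Q)) summable_on I"
  using has_sum_localized by (rule has_sum_imp_summable)

lemma localized_eq_on_support:
  assumes "Q \<in> I" "X \<in> M" "X \<subseteq> S Q"
  shows "localized_measure S I m X = m X"
proof -
  have "(\<Union>Q'\<in>I. X \<inter> S Q') = X" using assms(1,3) by blast
  then show ?thesis
    using has_sum_localized[of X] assms(2) sets_subset_H
    by (auto simp: localized_measure_def infsumI)
qed

lemma fin_signed_measure_localized: "fin_signed_measure \<Omega> H (localized_measure S I m)"
  unfolding fin_signed_measure_def
proof (intro conjI allI impI sigma_algebra_H)
  fix A :: "nat \<Rightarrow> 'a set" assume A: "range A \<subseteq> H" "disjoint_family A"
  define B where "B = (\<lambda>p :: nat \<times> 'b. A (fst p) \<inter> S (snd p))"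
  have "\<Union>(range A) \<in> H" using A(1) sigma_algebra.countable_UN[OF sigma_algebra_H] by blast
  have "((\<lambda>p. m (B p)) has_sum m (\<Union>p\<in>UNIV \<times> I. B p)) (UNIV \<times> I)"
  proof (rule has_sum_countable_Union)
    show "countable ((UNIV :: nat set) \<times> I)" by (rule countable_SIGMA[OF countableI_type countable_I])
    show "B p \<in> M" if "p \<in> UNIV \<times> I" for p
      using that A(1) Int_support by (auto simp: B_def)
    show "disjoint_family_on B (UNIV \<times> I)"
      unfolding B_def by (rule disjoint_family_on_Times[OF A(2) disjoint_S])
  qed
  moreover have "(\<Union>p\<in>UNIV \<times> I. B p) = (\<Union>Q\<in>I. (\<Union>n. A n) \<inter> S Q)"
    by (auto simp: B_def)
  ultimately have joint: "((\<lambda>p. m (B p)) has_sum localized_measure S I m (\<Union>n. A n)) (UNIV \<times> I)"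
    using infsumI[OF has_sum_localized[OF \<open>\<Union>(range A) \<in> H\<close>]]
    by (simp add: localized_measure_def)
  have "((\<lambda>Q. m (B (n, Q))) has_sum localized_measure S I m (A n)) I" for n
  proof -
    have "A n \<in> H" using A(1) by blast
    then show ?thesis
      using has_sum_infsum[OF summable_localized] by (simp add: B_def localized_measure_def)
  qed
  from has_sum_Sigma'[OF joint this]
  show "(\<lambda>n. localized_measure S I m (A n)) sums localized_measure S I m (\<Union>n. A n)"
    by (rule has_sum_imp_sums)
qed

sublocale localized: fin_signed_measure_space \<Omega> H "localized_measure S I m"
  by (rule fin_signed_measure_space.intro) (rule fin_signed_measure_localized)

lemma tot_var_localized_on_support:
  assumes "Q \<in> I" "E \<in> M" "E \<subseteq> S Q"
  shows "tot_var H (localized_measure S I m) E = tot_var M m E"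
proof (rule tot_var_cong)
  fix X assume "X \<subseteq> E"
  then have X: "X = X \<inter> S Q" using assms(3) by blast
  show "X \<in> H \<longleftrightarrow> X \<in> M"
    using Int_support[OF _ assms(1), of X] sets_subset_H X by auto
  show "X \<in> H \<Longrightarrow> localized_measure S I m X = m X"
    using localized_eq_on_support[OF assms(1)] Int_support[OF _ assms(1), of X] X \<open>X \<subseteq> E\<close> assms(3)
    by auto
qed

lemma sum_tot_var_le_localized:
  assumes "A \<in> H" "finite G" "G \<subseteq> I"
  shows "(\<Sum>Q\<in>G. tot_var M m (A \<inter> S Q)) \<le> tot_var H (localized_measure S I m) A"
proof -
  have A_Int: "A \<inter> S Q \<in> M" if "Q \<in> G" for Q using Int_support assms(1,3) that by blast
  then have "(\<Sum>Q\<in>G. tot_var M m (A \<inter> S Q)) = (\<Sum>Q\<in>G. tot_var H (localized_measure S I m) (A \<inter> S Q))"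
    using tot_var_localized_on_support assms(3) by (intro sum.cong) auto
  also have "\<dots> \<le> tot_var H (localized_measure S I m) (\<Union>Q\<in>G. A \<inter> S Q)"
  proof (rule localized.sum_tot_var_le)
    show "disjoint_family_on (\<lambda>Q. A \<inter> S Q) G"
      using disjoint_family_on_mono[OF assms(3) disjoint_S] by (auto simp: disjoint_family_on_def)
  qed (use assms(2) A_Int sets_subset_H in auto)
  also have "\<dots> \<le> tot_var H (localized_measure S I m) A"
    using A_Int sets_subset_H assms(1,2) by (intro localized.tot_var_mono localized.finite_UN) auto
  finally show ?thesis .
qed

lemma summable_tot_var_localized: "A \<in> H \<Longrightarrow> (\<lambda>Q. tot_var M m (A \<inter> S Q)) summable_on I"
  by (rule nonneg_bdd_above_summable_on)
    (auto intro!: tot_var_nonneg Int_support bdd_aboveI2 sum_tot_var_le_localized)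

lemma partition_sum_le_localized:
  assumes "A \<in> H" "D \<in> finite_partitions H A"
  shows "(\<Sum>X\<in>D. \<bar>localized_measure S I m X\<bar>) \<le> (\<Sum>\<^sub>\<infinity>Q\<in>I. tot_var M m (A \<inter> S Q))"
proof -
  have D: "finite D" "D \<subseteq> H" "disjoint D" "\<Union>D = A"
    using assms(2) by (simp_all add: finite_partitions_def)
  have norm_summable: "(\<lambda>Q. norm (m (X \<inter> S Q))) summable_on I" if "X \<in> D" for X
  proof -
    have "X \<in> H" using that D(2) by blast
    then show ?thesis
      by (rule summable_on_iff_abs_summable_on_real[THEN iffD1, OF summable_localized])
  qed
  then have abs_summable: "(\<lambda>Q. \<bar>m (X \<inter> S Q)\<bar>) summable_on I" if "X \<in> D" for X
    using that by simp
  have sum_has_sum: "((\<lambda>Q. \<Sum>X\<in>D. \<bar>m (X \<inter> S Q)\<bar>) has_sum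
      (\<Sum>X\<in>D. \<Sum>\<^sub>\<infinity>Q\<in>I. \<bar>m (X \<inter> S Q)\<bar>)) I"
    using D(1) abs_summable by (intro has_sum_sum has_sum_infsum)
  have "(\<Sum>X\<in>D. \<bar>localized_measure S I m X\<bar>) \<le> (\<Sum>X\<in>D. \<Sum>\<^sub>\<infinity>Q\<in>I. \<bar>m (X \<inter> S Q)\<bar>)"
    using norm_infsum_bound[OF norm_summable] by (intro sum_mono) (simp add: localized_measure_def)
  also have "\<dots> = (\<Sum>\<^sub>\<infinity>Q\<in>I. \<Sum>X\<in>D. \<bar>m (X \<inter> S Q)\<bar>)"
    using sum_has_sum by (rule infsumI[symmetric])
  also have "\<dots> \<le> (\<Sum>\<^sub>\<infinity>Q\<in>I. tot_var M m (A \<inter> S Q))"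
  proof (rule infsum_mono)
    show "(\<lambda>Q. \<Sum>X\<in>D. \<bar>m (X \<inter> S Q)\<bar>) summable_on I"
      using sum_has_sum by (rule has_sum_imp_summable)
    show "(\<lambda>Q. tot_var M m (A \<inter> S Q)) summable_on I"
      using assms(1) by (rule summable_tot_var_localized)
    fix Q assume "Q \<in> I"
    show "(\<Sum>X\<in>D. \<bar>m (X \<inter> S Q)\<bar>) \<le> tot_var M m (A \<inter> S Q)"
    proof (rule sum_abs_le_tot_var)
      show "X \<inter> S Q \<in> M" if "X \<in> D" for X using that D(2) Int_support \<open>Q \<in> I\<close> by blast
      show "disjoint_family_on (\<lambda>X. X \<inter> S Q) D"
        using D(3) by (auto simp: disjoint_family_on_def dest: disjointD)
      show "(\<Union>X\<in>D. X \<inter> S Q) = A \<inter> S Q" using D(4) by blast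
    qed (rule D(1))
  qed
  finally show ?thesis .
qed

lemma tot_var_localized:
  assumes "A \<in> H"
  shows "tot_var H (localized_measure S I m) A = (\<Sum>\<^sub>\<infinity>Q\<in>I. tot_var M m (A \<inter> S Q))"
proof (rule antisym)
  show "tot_var H (localized_measure S I m) A \<le> (\<Sum>\<^sub>\<infinity>Q\<in>I. tot_var M m (A \<inter> S Q))"
    using assms by (intro tot_var_le partition_sum_le_localized)
  show "(\<Sum>\<^sub>\<infinity>Q\<in>I. tot_var M m (A \<inter> S Q)) \<le> tot_var H (localized_measure S I m) A"
    using assms by (intro infsum_le_finite_sums summable_tot_var_localized sum_tot_var_le_localized)
qed

end

lemma hahn_localization_hahn_ext:
  assumes "fin_signed_measure \<Omega> F \<mu>" "disjoint_family_on S QQ" "\<And>Q. Q \<in> QQ \<Longrightarrow> S Q \<in> F"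
    and "countable I" "I \<subseteq> QQ"
  shows "hahn_localization \<Omega> F \<mu> (hahn_ext \<Omega> F QQ S) I S"
proof (intro hahn_localization.intro hahn_localization_axioms.intro)
  have F: "sigma_algebra \<Omega> F" using assms(1) by (simp add: fin_signed_measure_def)
  show "fin_signed_measure_space \<Omega> F \<mu>" using assms(1) by (rule fin_signed_measure_space.intro)
  show "sigma_algebra \<Omega> (hahn_ext \<Omega> F QQ S)" using F by (rule sigma_algebra_hahn_ext)
  show "F \<subseteq> hahn_ext \<Omega> F QQ S" by (rule sets_subset_hahn_ext)
  show "countable I" by fact
  show "disjoint_family_on S I" using assms(5,2) by (rule disjoint_family_on_mono)
  show "A \<inter> S Q \<in> F" if "A \<in> hahn_ext \<Omega> F QQ S" "Q \<in> I" for A Q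
    using hahn_ext_Int_support[OF F assms(2) _ assms(3) that(1)] that(2) assms(5) by blast
qed

section \<open>Localizable families\<close>

lemma ca_tot_var_null_mixture:
  assumes "pre_hahn_localizable \<Omega> F PP QQ S" "\<mu> \<in> ca \<Omega> F PP"
  obtains c :: "nat \<Rightarrow> real" and q where "\<And>n. q n \<in> QQ"
    "\<And>A. A \<in> F \<Longrightarrow> \<forall>n. 0 < c n \<longrightarrow> emeasure (q n) A = 0 \<Longrightarrow> tot_var F \<mu> A = 0"
proof -
  obtain P where "P \<in> PP" and P_null: "\<And>A. A \<in> null_sets P \<Longrightarrow> tot_var F \<mu> A = 0"
    using assms(2) by (auto simp: ca_def)
  then obtain R where "R \<in> sconv \<Omega> F QQ" and R_P: "null_sets R \<subseteq> null_sets P"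
    using assms(1) by (auto simp: pre_hahn_localizable_def dominated_by_def absolutely_continuous_def)
  then obtain c q where R: "sets R = F" "\<And>n. q n \<in> QQ"
    "\<And>A. A \<in> F \<Longrightarrow> emeasure R A = (\<Sum>n. ennreal (c n) * emeasure (q n) A)"
    unfolding sconv_def by blast
  have "tot_var F \<mu> A = 0"
    if A: "A \<in> F" and q_null: "\<forall>n. 0 < c n \<longrightarrow> emeasure (q n) A = 0" for A
  proof -
    have "(\<lambda>n. ennreal (c n) * emeasure (q n) A) = (\<lambda>n. 0)"
    proof
      fix n
      show "ennreal (c n) * emeasure (q n) A = 0"
        using q_null by (cases "0 < c n") (simp_all add: ennreal_neg)
    qed
    then have "A \<in> null_sets R" using A R(1,3) by (simp add: null_sets_def)
    then show ?thesis using R_P P_null by blast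
  qed
  with R(2) show ?thesis by (rule that)
qed

text \<open>The family \<open>I\<close> consists of the members of the localization charged by the countable
  convex combination that dominates \<open>\<mu>\<close>.\<close>

lemma ca_concentrated_on_countable_supports:
  assumes loc: "pre_hahn_localizable \<Omega> F PP QQ S" and "\<mu> \<in> ca \<Omega> F PP"
  obtains I where "countable I" "I \<subseteq> QQ" "supp_fam F QQ S \<mu> \<subseteq> I"
    "tot_var F \<mu> (\<Omega> - (\<Union>Q\<in>I. S Q)) = 0"
proof -
  interpret fin_signed_measure_space \<Omega> F \<mu>
    using assms(2) by (simp add: ca_def fin_signed_measure_space_def)
  obtain c :: "nat \<Rightarrow> real" and q where q: "\<And>n. q n \<in> QQ"
    and null: "\<And>A. A \<in> F \<Longrightarrow> \<forall>n. 0 < c n \<longrightarrow> emeasure (q n) A = 0 \<Longrightarrow> tot_var F \<mu> A = 0"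
    by (rule ca_tot_var_null_mixture[OF assms]) (rule that)
  have QQ: "prob_space Q" "space Q = \<Omega>" "sets Q = F" "S Q \<in> F" if "Q \<in> QQ" for Q
    using loc that by (auto simp: pre_hahn_localizable_def)
  have S_delta: "measure Q (S Q') = (if Q = Q' then 1 else 0)" if "Q \<in> QQ" "Q' \<in> QQ" for Q Q'
    using loc that by (auto simp: pre_hahn_localizable_def)
  have emeasure_q: "emeasure (q n) A = ennreal (measure (q n) A)" for n A
    using prob_space.finite_measure[OF QQ(1)[OF q]] by (rule finite_measure.emeasure_eq_measure)
  define I where "I = q ` {n. 0 < c n}"
  have T: "(\<Union>Q\<in>I. S Q) \<in> F"
    using QQ(4) q by (intro countable_UN'') (auto simp: I_def)
  have q_null_outside: "emeasure (q n) (\<Omega> - (\<Union>Q\<in>I. S Q)) = 0" if "0 < c n" for n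
  proof -
    interpret q: prob_space "q n" using QQ(1)[OF q] .
    have "measure (q n) (\<Omega> - (\<Union>Q\<in>I. S Q)) \<le> measure (q n) (\<Omega> - S (q n))"
      using that QQ(2-4)[OF q] by (intro q.finite_measure_mono) (auto simp: I_def)
    also have "\<dots> = 0"
      using q.prob_compl[of "S (q n)"] QQ(2-4)[OF q] S_delta[OF q q] by simp
    finally show ?thesis by (simp add: emeasure_q antisym measure_nonneg)
  qed
  have "countable I" "I \<subseteq> QQ" using q by (auto simp: I_def)
  moreover have "supp_fam F QQ S \<mu> \<subseteq> I"
  proof
    fix Q assume "Q \<in> supp_fam F QQ S \<mu>"
    then have Q: "Q \<in> QQ" "tot_var F \<mu> (S Q) \<noteq> 0" by (auto simp: supp_fam_def)
    show "Q \<in> I"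
    proof (rule ccontr)
      assume "Q \<notin> I"
      then have "emeasure (q n) (S Q) = 0" if "0 < c n" for n
        using that S_delta[OF q Q(1)] by (auto simp: I_def emeasure_q)
      then show False using null[OF QQ(4)[OF Q(1)]] Q(2) by blast
    qed
  qed
  moreover have "tot_var F \<mu> (\<Omega> - (\<Union>Q\<in>I. S Q)) = 0"
    using Diff[OF top T] q_null_outside by (intro null allI impI)
  ultimately show ?thesis by (rule that)
qed

theorem theorem4p3:
  fixes \<Omega> :: "'a set" and F :: "'a set set"
    and PP QQ :: "'a measure set" and S :: "'a measure \<Rightarrow> 'a set"
  assumes "sigma_algebra \<Omega> F"
    and "\<forall>P\<in>PP. prob_space P \<and> space P = \<Omega> \<and> sets P = F"
    and "pre_hahn_localizable \<Omega> F PP QQ S"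
    and "\<forall>Q\<in>QQ. \<forall>R\<in>QQ. Q \<noteq> R \<longrightarrow> S Q \<inter> S R = {}"
    and "\<mu> \<in> ca \<Omega> F PP"
  shows "countable (supp_fam F QQ S \<mu>)
    \<and> (\<forall>A\<in>hahn_ext \<Omega> F QQ S. (\<forall>Q\<in>QQ. A \<inter> S Q \<in> F)
          \<and> (\<lambda>Q. \<mu> (A \<inter> S Q)) summable_on supp_fam F QQ S \<mu>)
    \<and> fin_signed_measure \<Omega> (hahn_ext \<Omega> F QQ S)
        (\<lambda>A. \<Sum>\<^sub>\<infinity>Q\<in>supp_fam F QQ S \<mu>. \<mu> (A \<inter> S Q))
    \<and> (\<forall>A\<in>F. (\<Sum>\<^sub>\<infinity>Q\<in>supp_fam F QQ S \<mu>. \<mu> (A \<inter> S Q)) = \<mu> A)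
    \<and> (\<forall>A\<in>hahn_ext \<Omega> F QQ S.
         tot_var (hahn_ext \<Omega> F QQ S) (\<lambda>B. \<Sum>\<^sub>\<infinity>Q\<in>supp_fam F QQ S \<mu>. \<mu> (B \<inter> S Q)) A
         = (\<Sum>\<^sub>\<infinity>Q\<in>supp_fam F QQ S \<mu>. tot_var F \<mu> (A \<inter> S Q)))"
proof -
  have \<mu>: "fin_signed_measure \<Omega> F \<mu>" using assms(5) by (simp add: ca_def)
  obtain I where I: "countable I" "I \<subseteq> QQ" "supp_fam F QQ S \<mu> \<subseteq> I"
    "tot_var F \<mu> (\<Omega> - (\<Union>Q\<in>I. S Q)) = 0"
    using ca_concentrated_on_countable_supports[OF assms(3,5)] .
  have S_sets: "\<And>Q. Q \<in> QQ \<Longrightarrow> S Q \<in> F" using assms(3) by (simp add: pre_hahn_localizable_def)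
  have disjoint: "disjoint_family_on S QQ" using assms(4) by (simp add: disjoint_family_on_def)
  define Sp where "Sp = supp_fam F QQ S \<mu>"
  have Sp: "Sp = {Q \<in> I. 0 < tot_var F \<mu> (S Q)}" using I(2,3) by (auto simp: Sp_def supp_fam_def)
  then have "Sp \<subseteq> I" by blast
  interpret hahn_localization \<Omega> F \<mu> "hahn_ext \<Omega> F QQ S" Sp S
    using hahn_localization_hahn_ext[OF \<mu> disjoint S_sets countable_subset[OF \<open>Sp \<subseteq> I\<close> I(1)]]
      \<open>Sp \<subseteq> I\<close> I(2) by blast
  have "localized_measure S Sp \<mu> A = \<mu> A" if "A \<in> F" for A
    using has_sum_Int_supports[OF I(1) S_sets disjoint_family_on_mono[OF I(2) disjoint] I(4) that] I(2)
    unfolding localized_measure_def Sp by (auto intro: infsumI)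
  moreover have "localized_measure S Sp \<mu> = (\<lambda>A. \<Sum>\<^sub>\<infinity>Q\<in>Sp. \<mu> (A \<inter> S Q))"
    by (simp add: localized_measure_def[abs_def])
  moreover have "A \<inter> S Q \<in> F" if "A \<in> hahn_ext \<Omega> F QQ S" "Q \<in> QQ" for A Q
    using hahn_ext_Int_support[OF assms(1) disjoint that(2) S_sets[OF that(2)] that(1)] .
  ultimately show ?thesis
    using countable_I summable_localized fin_signed_measure_localized tot_var_localized
    unfolding Sp_def by auto
qed

end
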